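(* Let $(\mathcal C,\mathcal D,O,\vec z,v)$ be a configuration for $(F,f)$, let $C$ be a PB constraint, and suppose there is a substitution $\omega$ such that $$\text{(a)}\quad \mathcal C\cup\mathcal D\cup\{f\le v-1\}\cup\{\neg C\}\ \vdash\ \mathcal C|_\omega\cup O(\vec z|_\omega,\vec z)\cup\{f|_\omega\le f\},$$ $$\text{(b)}\quad \mathcal C\cup\mathcal D\cup\{f\le v-1\}\cup\{\neg C\}\cup O(\vec z,\vec z|_\omega)\ \vdash\ 0\ge1.$$ If $(\mathcal C,\mathcal D,O,\vec z,v)$ is weakly valid then $(\mathcal C,\mathcal D\cup\{C\},O,\vec z,v)$ is weakly valid; if it is valid then $(\mathcal C,\mathcal D\cup\{C\},O,\vec z,v)$ is valid.
   Context: Boolean variables take values in $\{0,1\}$; a literal is a variable $x$ or $\bar x=1-x$. A PB constraint is $C:\ \sum_i a_i\ell_i\ge A$ with integer $a_i,A$; its negation $\neg C$ is $\sum_i -a_i\ell_i\ge -A+1$. A total assignment $\alpha$ satisfies $C$ if $\sum_i a_i\alpha(\ell_i)\ge A$. A PB formula is a finite set of PB constraints. A substitution $\omega$ maps variables to literals or to $\{0,1\}$ (identity outside its domain, extended to literals by $\omega(\bar x)=\overline{\omega(x)}$); $C|_\omega$ replaces each $\ell_i$ by $\omega(\ell_i)$, $G|_\omega=\{D|_\omega: D\in G\}$, and for a total assignment $\alpha$, $\alpha\circ\omega$ is $x\mapsto\alpha(\omega(x))$. An objective is $f=\sum_i w_i\ell_i$ with integer $w_i$; $f|_\omega=\sum_i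 w_i\omega(\ell_i)$; $f\le k$ and $f|_\omega\le f$ are read as PB constraints, and for $k=\infty$ the constraints $f\le\infty$, $f\le\infty-1$ are trivially true (empty). $G\vdash D$ means $D$ is derivable from $G$ in the cutting planes system (axioms from $G$, literal axioms $\ell\ge0$, positive integer linear combinations, division of a constraint with nonnegative coefficients by a positive integer rounding coefficients and degree up), where additionally $G\vdash D$ whenever $0\ge1$ is so derivable from $G\cup\{\neg D\}$; $G\vdash H$ means $G\vdash D$ for all $D\in H$. This derivability is sound. A preorder encoding is a PB formula $O(\vec u,\vec v)$ over two lists of $n$ placeholder variables with a list $\vec z=(z_1,\dots,z_n)$ of variables, such that $\alpha\preceq\beta$ iff $O(\vec z|_\alpha,\vec z|_\beta)$ is true is reflexive and transitive; here $O(\vec z|_\alpha,\vec z|_\beta)$ is $O$ with $u_i$ replaced by $\alpha(z_i)$ and $v_i$ by $\beta(z_i)$, so $O(\vec z|_\omega,\vec z)$ replaces $u_i$ by $\omega(z_i)$ and $v_i$ by $z_i$, and $O(\vec z,\vec z|_\omega)$ replaces $u_i$ by $z_i$ and $v_i$ by $\omega(z_i)$. $\alpha\preceq_f\beta$ iff $\alpha\preceq\beta$ and $f(\alpha)\le f(\beta)$. Fix input $F$ and objective $f$. A configuration $(\mathcal C,\mathcal D,O,\vec z,v)$ has PB sets $\mathcal C,\mathcal D$, a preorder encoding, and $v\in\mathbb Z\cup\{\infty\}$. It is weakly valid if (1) for every integer $v'<v$, satisfiability of $F\cup\{f\le v'\}$ implies satisfiability of $\mathcal C\cup\{f\le v'\}$;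 (2) every total $\rho$ satisfying $\mathcal C\cup\{f\le v-1\}$ admits a total $\rho'\preceq_f\rho$ satisfying $\mathcal C\cup\mathcal D\cup\{f\le v-1\}$. It is valid if also (3) $v<\infty$ implies $F\cup\{f\le v\}$ satisfiable; (4) for every integer $v'<v$, satisfiability of $\mathcal C\cup\{f\le v'\}$ implies satisfiability of $F\cup\{f\le v'\}$. *)

theory Defs
  imports Main
begin

datatype 'v lit = Pos 'v | Neg 'v

fun lit_var :: "'v lit \<Rightarrow> 'v" where
  "lit_var (Pos x) = x" | "lit_var (Neg x) = x"

fun lit_neg :: "'v lit \<Rightarrow> 'v lit" where
  "lit_neg (Pos x) = Neg x" | "lit_neg (Neg x) = Pos x"

datatype 'v pbc = Geq "(int \<times> 'v lit) list" int

type_synonym 'v assignment = "'v \<Rightarrow> bool"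

fun lit_val :: "'v assignment \<Rightarrow> 'v lit \<Rightarrow> int" where
  "lit_val \<alpha> (Pos x) = (if \<alpha> x then 1 else 0)"
| "lit_val \<alpha> (Neg x) = 1 - (if \<alpha> x then 1 else 0)"

definition terms_val :: "'v assignment \<Rightarrow> (int \<times> 'v lit) list \<Rightarrow> int" where
  "terms_val \<alpha> ts = sum_list (map (\<lambda>(a, l). a * lit_val \<alpha> l) ts)"

fun pb_sat :: "'v assignment \<Rightarrow> 'v pbc \<Rightarrow> bool" where
  "pb_sat \<alpha> (Geq ts A) = (terms_val \<alpha> ts \<ge> A)"

definition pb_sat_set :: "'v assignment \<Rightarrow> 'v pbc set \<Rightarrow> bool" where
  "pb_sat_set \<alpha> G = (\<forall>C\<in>G. pb_sat \<alpha> C)"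

definition pb_satisfiable :: "'v pbc set \<Rightarrow> bool" where
  "pb_satisfiable G = (\<exists>\<alpha>. pb_sat_set \<alpha> G)"

fun pb_neg :: "'v pbc \<Rightarrow> 'v pbc" where
  "pb_neg (Geq ts A) = Geq (map (\<lambda>(a, l). (- a, l)) ts) (- A + 1)"

definition pb_false :: "'v pbc" where
  "pb_false = Geq [] 1"

text \<open>Since a negative literal is by definition 1 - x, a constraint is identified with any
  constraint having the same normal form over variables (coefficient of each variable
  and degree after moving the constants to the right-hand side).\<close>
definition var_coef :: "(int \<times> 'v lit) list \<Rightarrow> 'v \<Rightarrow> int" where
  "var_coef ts x = sum_list (map (\<lambda>(a, l). case l of Pos y \<Rightarrow> (if y = x then a else 0)
                                                 | Neg y \<Rightarrow> (if y = x then - a else 0)) ts)"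

definition const_part :: "(int \<times> 'v lit) list \<Rightarrow> int" where
  "const_part ts = sum_list (map (\<lambda>(a, l). case l of Pos y \<Rightarrow> 0 | Neg y \<Rightarrow> a) ts)"

fun same_form :: "'v pbc \<Rightarrow> 'v pbc \<Rightarrow> bool" where
  "same_form (Geq ts A) (Geq us B) =
     (var_coef ts = var_coef us \<and> A - const_part ts = B - const_part us)"

definition ceil_div :: "int \<Rightarrow> int \<Rightarrow> int" where
  "ceil_div a c = - ((- a) div c)"

inductive cp :: "'v pbc set \<Rightarrow> 'v pbc \<Rightarrow> bool" for G :: "'v pbc set" where
  cp_axiom: "C \<in> G \<Longrightarrow> cp G C"
| cp_lit: "cp G (Geq [(1, l)] 0)"
| cp_add: "cp G (Geq ts A) \<Longrightarrow> cp G (Geq us B) \<Longrightarrow> cp G (Geq (ts @ us) (A + B))"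
| cp_mult: "cp G (Geq ts A) \<Longrightarrow> c > 0 \<Longrightarrow>
             cp G (Geq (map (\<lambda>(a, l). (c * a, l)) ts) (c * A))"
| cp_div: "cp G (Geq ts A) \<Longrightarrow> (\<forall>(a, l) \<in> set ts. a \<ge> 0) \<Longrightarrow> c > 0 \<Longrightarrow>
             cp G (Geq (map (\<lambda>(a, l). (ceil_div a c, l)) ts) (ceil_div A c))"
| cp_norm: "cp G C \<Longrightarrow> same_form C D \<Longrightarrow> cp G D"

definition derives :: "'v pbc set \<Rightarrow> 'v pbc \<Rightarrow> bool" where
  "derives G D = (cp G D \<or> cp (insert (pb_neg D) G) pb_false)"

definition derives_set :: "'v pbc set \<Rightarrow> 'v pbc set \<Rightarrow> bool" where
  "derives_set G H = (\<forall>D\<in>H. derives G D)"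

text \<open>A substitution maps each variable to a literal or a constant; variables outside its
  domain are mapped to their own positive literal.\<close>
datatype 'v sval = SLit "'v lit" | SConst bool

fun sval_neg :: "'v sval \<Rightarrow> 'v sval" where
  "sval_neg (SLit l) = SLit (lit_neg l)" | "sval_neg (SConst b) = SConst (\<not> b)"

fun subst_lit :: "('a \<Rightarrow> 'b sval) \<Rightarrow> 'a lit \<Rightarrow> 'b sval" where
  "subst_lit \<omega> (Pos x) = \<omega> x" | "subst_lit \<omega> (Neg x) = sval_neg (\<omega> x)"

definition subst_terms :: "('a \<Rightarrow> 'b sval) \<Rightarrow> (int \<times> 'a lit) list \<Rightarrow> (int \<times> 'b lit) list" where
  "subst_terms \<omega> ts = concat (map (\<lambda>(a, l). case subst_lit \<omega> l of
                                     SLit l' \<Rightarrow> [(a, l')] | SConst b \<Rightarrow> []) ts)"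

definition subst_const :: "('a \<Rightarrow> 'b sval) \<Rightarrow> (int \<times> 'a lit) list \<Rightarrow> int" where
  "subst_const \<omega> ts = sum_list (map (\<lambda>(a, l). case subst_lit \<omega> l of
                                     SLit l' \<Rightarrow> 0 | SConst b \<Rightarrow> (if b then a else 0)) ts)"

fun pb_subst :: "('a \<Rightarrow> 'b sval) \<Rightarrow> 'a pbc \<Rightarrow> 'b pbc" where
  "pb_subst \<omega> (Geq ts A) = Geq (subst_terms \<omega> ts) (A - subst_const \<omega> ts)"

definition pb_subst_set :: "('a \<Rightarrow> 'b sval) \<Rightarrow> 'a pbc set \<Rightarrow> 'b pbc set" where
  "pb_subst_set \<omega> G = pb_subst \<omega> ` G"

type_synonym 'v objective = "(int \<times> 'v lit) list"

definition obj_val :: "'v objective \<Rightarrow> 'v assignment \<Rightarrow> int" where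
  "obj_val f \<alpha> = terms_val \<alpha> f"

datatype ubound = Fin int | Infty

fun ub_dec :: "ubound \<Rightarrow> ubound" where
  "ub_dec (Fin k) = Fin (k - 1)" | "ub_dec Infty = Infty"

fun ub_less :: "int \<Rightarrow> ubound \<Rightarrow> bool" where
  "ub_less k (Fin v) = (k < v)" | "ub_less k Infty = True"

definition obj_le :: "'v objective \<Rightarrow> int \<Rightarrow> 'v pbc" where
  "obj_le f k = Geq (map (\<lambda>(w, l). (- w, l)) f) (- k)"

fun obj_le_ub :: "'v objective \<Rightarrow> ubound \<Rightarrow> 'v pbc set" where
  "obj_le_ub f (Fin k) = {obj_le f k}" | "obj_le_ub f Infty = {}"

text \<open>The constraint f|_omega <= f, i.e. sum w_i l_i - sum w_i omega(l_i) >= 0.\<close>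
definition obj_subst_le :: "('v \<Rightarrow> 'v sval) \<Rightarrow> 'v objective \<Rightarrow> 'v pbc" where
  "obj_subst_le \<omega> f =
     Geq (f @ map (\<lambda>(w, l). (- w, l)) (subst_terms \<omega> f)) (subst_const \<omega> f)"

text \<open>Placeholder variables u_i (PU i) and v_i (PV i).\<close>
datatype ph = PU nat | PV nat

definition pb_vars :: "'v pbc \<Rightarrow> 'v set" where
  "pb_vars C = (case C of Geq ts A \<Rightarrow> lit_var ` snd ` set ts)"

definition inst_asg :: "'v list \<Rightarrow> 'v assignment \<Rightarrow> 'v assignment \<Rightarrow> ph \<Rightarrow> 'v sval" where
  "inst_asg z \<alpha> \<beta> p = (case p of PU i \<Rightarrow> SConst (\<alpha> (z ! i)) | PV i \<Rightarrow> SConst (\<beta> (z ! i)))"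

text \<open>alpha \<preceq> beta iff Ord(z|_alpha, z|_beta) is true (it is variable-free, so true under any
  assignment; we evaluate it under alpha).\<close>
definition pre_le :: "ph pbc set \<Rightarrow> 'v list \<Rightarrow> 'v assignment \<Rightarrow> 'v assignment \<Rightarrow> bool" where
  "pre_le Ord z \<alpha> \<beta> = pb_sat_set \<alpha> (pb_subst_set (inst_asg z \<alpha> \<beta>) Ord)"

definition preorder_encoding :: "ph pbc set \<Rightarrow> 'v list \<Rightarrow> bool" where
  "preorder_encoding Ord z =
     (finite Ord
      \<and> (\<forall>C\<in>Ord. \<forall>p\<in>pb_vars C. (\<exists>i<length z. p = PU i \<or> p = PV i))
      \<and> (\<forall>\<alpha>. pre_le Ord z \<alpha> \<alpha>)
      \<and> (\<forall>\<alpha> \<beta> \<gamma>. pre_le Ord z \<alpha> \<beta> \<longrightarrow> pre_le Ord z \<beta> \<gamma> \<longrightarrow> pre_le Ord z \<alpha> \<gamma>))"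

definition pre_le_f :: "ph pbc set \<Rightarrow> 'v list \<Rightarrow> 'v objective \<Rightarrow> 'v assignment \<Rightarrow> 'v assignment \<Rightarrow> bool" where
  "pre_le_f Ord z f \<alpha> \<beta> = (pre_le Ord z \<alpha> \<beta> \<and> obj_val f \<alpha> \<le> obj_val f \<beta>)"

text \<open>Ord(z|_omega, z): u_i := omega(z_i), v_i := z_i.\<close>
definition inst_left :: "'v list \<Rightarrow> ('v \<Rightarrow> 'v sval) \<Rightarrow> ph \<Rightarrow> 'v sval" where
  "inst_left z \<omega> p = (case p of PU i \<Rightarrow> \<omega> (z ! i) | PV i \<Rightarrow> SLit (Pos (z ! i)))"

text \<open>Ord(z, z|_omega): u_i := z_i, v_i := omega(z_i).\<close>
definition inst_right :: "'v list \<Rightarrow> ('v \<Rightarrow> 'v sval) \<Rightarrow> ph \<Rightarrow> 'v sval" where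
  "inst_right z \<omega> p = (case p of PU i \<Rightarrow> SLit (Pos (z ! i)) | PV i \<Rightarrow> \<omega> (z ! i))"

definition weakly_valid ::
  "'v pbc set \<Rightarrow> 'v objective \<Rightarrow> 'v pbc set \<Rightarrow> 'v pbc set \<Rightarrow> ph pbc set \<Rightarrow> 'v list \<Rightarrow> ubound \<Rightarrow> bool"
where
  "weakly_valid F f \<C> \<D> Ord z v =
     ((\<forall>v'. ub_less v' v \<longrightarrow> pb_satisfiable (F \<union> {obj_le f v'})
                            \<longrightarrow> pb_satisfiable (\<C> \<union> {obj_le f v'}))
      \<and> (\<forall>\<rho>. pb_sat_set \<rho> (\<C> \<union> obj_le_ub f (ub_dec v)) \<longrightarrow>
             (\<exists>\<rho>'. pre_le_f Ord z f \<rho>' \<rho> \<and> pb_sat_set \<rho>' (\<C> \<union> \<D> \<union> obj_le_ub f (ub_dec v)))))"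

definition valid ::
  "'v pbc set \<Rightarrow> 'v objective \<Rightarrow> 'v pbc set \<Rightarrow> 'v pbc set \<Rightarrow> ph pbc set \<Rightarrow> 'v list \<Rightarrow> ubound \<Rightarrow> bool"
where
  "valid F f \<C> \<D> Ord z v =
     (weakly_valid F f \<C> \<D> Ord z v
      \<and> (\<forall>k. v = Fin k \<longrightarrow> pb_satisfiable (F \<union> {obj_le f k}))
      \<and> (\<forall>v'. ub_less v' v \<longrightarrow> pb_satisfiable (\<C> \<union> {obj_le f v'})
                            \<longrightarrow> pb_satisfiable (F \<union> {obj_le f v'})))"

end

theory Submission
  imports Defs
begin

text \<open>
  If \<rho> satisfies \<C> \<union> \<D> and the bound on f but violates C, condition (a) shows that \<rho> \<circ> \<omega>
  satisfies \<C> and the bound and lies \<preceq>_f-below \<rho>, while (b) shows that \<rho> \<circ> \<omega> is even strictly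
  below \<rho> in \<preceq>. Weak validity then gives a solution of \<C> \<union> \<D> below \<rho> \<circ> \<omega>, hence strictly
  below \<rho>. Since \<preceq> only looks at the finitely many variables z, its strict part is well
  founded, so repeating this descent must end in an assignment that also satisfies C.
  The remaining conditions of (weak) validity do not mention \<D>.
\<close>

lemma pb_sat_set_Un [simp]: "pb_sat_set \<alpha> (A \<union> B) \<longleftrightarrow> pb_sat_set \<alpha> A \<and> pb_sat_set \<alpha> B"
  by (auto simp: pb_sat_set_def)

lemma pb_sat_set_insert [simp]: "pb_sat_set \<alpha> (insert C A) \<longleftrightarrow> pb_sat \<alpha> C \<and> pb_sat_set \<alpha> A"
  by (auto simp: pb_sat_set_def)

lemma pb_sat_set_empty [simp]: "pb_sat_set \<alpha> {}"
  by (simp add: pb_sat_set_def)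

lemma lit_val_cases: "lit_val \<alpha> l = 0 \<or> lit_val \<alpha> l = 1"
  by (cases l) auto

lemma lit_val_lit_neg: "lit_val \<alpha> (lit_neg l) = 1 - lit_val \<alpha> l"
  by (cases l) auto

lemma terms_val_Nil [simp]: "terms_val \<alpha> [] = 0"
  by (simp add: terms_val_def)

lemma terms_val_Cons [simp]: "terms_val \<alpha> ((a, l) # ts) = a * lit_val \<alpha> l + terms_val \<alpha> ts"
  by (simp add: terms_val_def)

lemma terms_val_append [simp]: "terms_val \<alpha> (ts @ us) = terms_val \<alpha> ts + terms_val \<alpha> us"
  by (simp add: terms_val_def)

lemma terms_val_scale: "terms_val \<alpha> (map (\<lambda>(a, l). (c * a, l)) ts) = c * terms_val \<alpha> ts"
  by (induction ts) (auto simp: ring_distribs)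

lemma terms_val_uminus: "terms_val \<alpha> (map (\<lambda>(a, l). (- a, l)) ts) = - terms_val \<alpha> ts"
  by (induction ts) auto

lemma terms_val_cong:
  assumes "\<And>x. x \<in> lit_var ` snd ` set ts \<Longrightarrow> \<alpha> x = \<beta> x"
  shows "terms_val \<alpha> ts = terms_val \<beta> ts"
  using assms
proof (induction ts)
  case (Cons t ts)
  obtain a l where t: "t = (a, l)" by (cases t)
  have "lit_val \<alpha> l = lit_val \<beta> l" using Cons.prems t by (cases l) auto
  then show ?case using Cons t by simp
qed simp

lemma pb_sat_cong:
  assumes "\<And>x. x \<in> pb_vars C \<Longrightarrow> \<alpha> x = \<beta> x"
  shows "pb_sat \<alpha> C \<longleftrightarrow> pb_sat \<beta> C"
proof (cases C)
  case (Geq ts A)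
  then have "terms_val \<alpha> ts = terms_val \<beta> ts"
    using assms by (intro terms_val_cong) (auto simp: pb_vars_def)
  then show ?thesis using Geq by simp
qed

lemma pb_sat_pb_neg: "\<not> pb_sat \<alpha> C \<Longrightarrow> pb_sat \<alpha> (pb_neg C)"
  by (cases C) (simp add: terms_val_uminus)

subsection \<open>Soundness of cutting planes\<close>

lemma ceil_div_add_le:
  assumes "(c::int) > 0"
  shows "ceil_div (a + b) c \<le> ceil_div a c + ceil_div b c"
proof -
  have "0 \<le> ((- a) mod c + (- b) mod c) div c" using assms by (simp add: div_int_pos_iff)
  then show ?thesis using div_add1_eq[of "- a" "- b" c] by (simp add: ceil_div_def)
qed

lemma ceil_div_mono: "(c::int) > 0 \<Longrightarrow> a \<le> b \<Longrightarrow> ceil_div a c \<le> ceil_div b c"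
  unfolding ceil_div_def using zdiv_mono1[of "- b" "- a" c] by simp

lemma ceil_div_mult_lit_val: "ceil_div (a * lit_val \<alpha> l) c = ceil_div a c * lit_val \<alpha> l"
  using lit_val_cases[of \<alpha> l] by (auto simp: ceil_div_def)

lemma ceil_div_terms_val_le:
  assumes "(c::int) > 0"
  shows "ceil_div (terms_val \<alpha> ts) c \<le> terms_val \<alpha> (map (\<lambda>(a, l). (ceil_div a c, l)) ts)"
proof (induction ts)
  case Nil
  show ?case by (simp add: ceil_div_def)
next
  case (Cons t ts)
  obtain a l where t: "t = (a, l)" by (cases t)
  have "ceil_div (a * lit_val \<alpha> l + terms_val \<alpha> ts) c
        \<le> ceil_div a c * lit_val \<alpha> l + ceil_div (terms_val \<alpha> ts) c"
    using ceil_div_add_le[OF assms] by (metis ceil_div_mult_lit_val)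
  then show ?case using Cons t by simp
qed

lemma terms_val_minus_const_part:
  assumes "finite V" and "lit_var ` snd ` set ts \<subseteq> V"
  shows "terms_val \<alpha> ts - const_part ts = (\<Sum>x\<in>V. var_coef ts x * (if \<alpha> x then 1 else 0))"
  using assms(2)
proof (induction ts)
  case Nil
  show ?case by (simp add: const_part_def var_coef_def)
next
  case (Cons t ts)
  obtain a l where t: "t = (a, l)" by (cases t)
  have y: "lit_var l \<in> V" using Cons.prems t by auto
  have head: "a * lit_val \<alpha> l - const_part [t]
              = (\<Sum>x\<in>V. var_coef [t] x * (if \<alpha> x then 1 else 0))"
  proof (cases l)
    case (Pos y)
    have "(\<Sum>x\<in>V. var_coef [t] x * (if \<alpha> x then 1 else 0))
          = (\<Sum>x\<in>V. if y = x then a * (if \<alpha> y then 1 else 0) else 0)"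
      by (rule sum.cong) (auto simp: var_coef_def t Pos)
    then show ?thesis using y assms(1) by (simp add: t Pos const_part_def)
  next
    case (Neg y)
    have "(\<Sum>x\<in>V. var_coef [t] x * (if \<alpha> x then 1 else 0))
          = (\<Sum>x\<in>V. if y = x then - a * (if \<alpha> y then 1 else 0) else 0)"
      by (rule sum.cong) (auto simp: var_coef_def t Neg)
    then show ?thesis using y assms(1) by (simp add: t Neg const_part_def algebra_simps)
  qed
  have "var_coef (t # ts) x = var_coef [t] x + var_coef ts x" for x
    by (simp add: var_coef_def)
  moreover have "const_part (t # ts) = const_part [t] + const_part ts"
    by (simp add: const_part_def)
  ultimately show ?case
    using Cons head t by (simp add: sum.distrib algebra_simps)
qed

lemma same_form_sound: "same_form C D \<Longrightarrow> pb_sat \<alpha> C \<Longrightarrow> pb_sat \<alpha> D"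
proof (cases C; cases D)
  fix ts A us B
  assume C: "C = Geq ts A" and D: "D = Geq us B" and "same_form C D" "pb_sat \<alpha> C"
  let ?V = "lit_var ` snd ` set ts \<union> lit_var ` snd ` set us"
  have "terms_val \<alpha> ts - const_part ts = (\<Sum>x\<in>?V. var_coef ts x * (if \<alpha> x then 1 else 0))"
    and "terms_val \<alpha> us - const_part us = (\<Sum>x\<in>?V. var_coef us x * (if \<alpha> x then 1 else 0))"
    by (rule terms_val_minus_const_part; auto)+
  then show "pb_sat \<alpha> D" using \<open>same_form C D\<close> \<open>pb_sat \<alpha> C\<close> C D by simp
qed

lemma cp_sound: "cp G D \<Longrightarrow> pb_sat_set \<alpha> G \<Longrightarrow> pb_sat \<alpha> D"
proof (induction rule: cp.induct)
  case (cp_axiom C)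
  then show ?case by (simp add: pb_sat_set_def)
next
  case (cp_lit l)
  then show ?case using lit_val_cases[of \<alpha> l] by auto
next
  case (cp_add ts A us B)
  then show ?case by simp
next
  case (cp_mult ts A c)
  then show ?case by (simp add: terms_val_scale)
next
  case (cp_div ts A c)
  then show ?case
    using ceil_div_terms_val_le[of c \<alpha> ts] ceil_div_mono[of c A "terms_val \<alpha> ts"] by simp
next
  case (cp_norm C D)
  then show ?case using same_form_sound by blast
qed

lemma derives_sound:
  assumes "derives G D" and "pb_sat_set \<alpha> G"
  shows "pb_sat \<alpha> D"
proof (rule ccontr)
  assume "\<not> pb_sat \<alpha> D"
  then have "pb_sat_set \<alpha> (insert (pb_neg D) G)" using assms(2) pb_sat_pb_neg by simp
  moreover have "\<not> pb_sat \<alpha> pb_false" by (simp add: pb_false_def)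
  ultimately show False
    using assms \<open>\<not> pb_sat \<alpha> D\<close> cp_sound unfolding derives_def by blast
qed

lemma derives_set_sound: "derives_set G H \<Longrightarrow> pb_sat_set \<alpha> G \<Longrightarrow> pb_sat_set \<alpha> H"
  using derives_sound unfolding derives_set_def pb_sat_set_def[of \<alpha> H] by blast

subsection \<open>Substitutions\<close>

fun sval_holds :: "'v assignment \<Rightarrow> 'v sval \<Rightarrow> bool" where
  "sval_holds \<alpha> (SLit l) \<longleftrightarrow> lit_val \<alpha> l = 1"
| "sval_holds \<alpha> (SConst b) \<longleftrightarrow> b"

definition assign_subst :: "'v assignment \<Rightarrow> ('a \<Rightarrow> 'v sval) \<Rightarrow> 'a assignment" where
  "assign_subst \<alpha> \<sigma> = (\<lambda>x. sval_holds \<alpha> (\<sigma> x))"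

lemma lit_val_assign_subst:
  "lit_val (assign_subst \<alpha> \<sigma>) l
   = (case subst_lit \<sigma> l of SLit l' \<Rightarrow> lit_val \<alpha> l' | SConst b \<Rightarrow> (if b then 1 else 0))"
  using lit_val_cases[of \<alpha>]
  by (cases l; cases "\<sigma> (lit_var l)") (auto simp: assign_subst_def lit_val_lit_neg)

lemma terms_val_assign_subst:
  "terms_val (assign_subst \<alpha> \<sigma>) ts = terms_val \<alpha> (subst_terms \<sigma> ts) + subst_const \<sigma> ts"
proof (induction ts)
  case Nil
  show ?case by (simp add: subst_terms_def subst_const_def)
next
  case (Cons t ts)
  obtain a l where t: "t = (a, l)" by (cases t)
  show ?case
    using Cons lit_val_assign_subst[of \<alpha> \<sigma> l]
    by (cases "subst_lit \<sigma> l") (simp_all add: t subst_terms_def subst_const_def)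
qed

lemma pb_sat_pb_subst: "pb_sat \<alpha> (pb_subst \<sigma> C) \<longleftrightarrow> pb_sat (assign_subst \<alpha> \<sigma>) C"
  by (cases C) (auto simp: terms_val_assign_subst)

lemma pb_sat_set_pb_subst_set:
  "pb_sat_set \<alpha> (pb_subst_set \<sigma> G) \<longleftrightarrow> pb_sat_set (assign_subst \<alpha> \<sigma>) G"
  by (auto simp: pb_sat_set_def pb_subst_set_def pb_sat_pb_subst)

lemma pb_sat_obj_le: "pb_sat \<alpha> (obj_le f k) \<longleftrightarrow> obj_val f \<alpha> \<le> k"
  by (auto simp: obj_le_def obj_val_def terms_val_uminus)

lemma pb_sat_obj_subst_le:
  "pb_sat \<alpha> (obj_subst_le \<omega> f) \<longleftrightarrow> obj_val f (assign_subst \<alpha> \<omega>) \<le> obj_val f \<alpha>"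
  by (auto simp: obj_subst_le_def obj_val_def terms_val_uminus terms_val_assign_subst)

lemma pb_sat_set_obj_le_ub_mono:
  "pb_sat_set \<alpha> (obj_le_ub f u) \<Longrightarrow> obj_val f \<beta> \<le> obj_val f \<alpha> \<Longrightarrow> pb_sat_set \<beta> (obj_le_ub f u)"
  by (cases u) (auto simp: pb_sat_obj_le)

subsection \<open>Preorder encodings\<close>

definition pair_assign :: "'v list \<Rightarrow> 'v assignment \<Rightarrow> 'v assignment \<Rightarrow> ph assignment" where
  "pair_assign z \<alpha> \<beta> = (\<lambda>p. case p of PU i \<Rightarrow> \<alpha> (z ! i) | PV i \<Rightarrow> \<beta> (z ! i))"

lemma pre_le_iff_pair_assign: "pre_le Ord z \<alpha> \<beta> \<longleftrightarrow> pb_sat_set (pair_assign z \<alpha> \<beta>) Ord"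
proof -
  have "assign_subst \<alpha> (inst_asg z \<alpha> \<beta>) = pair_assign z \<alpha> \<beta>"
    by (auto simp: assign_subst_def inst_asg_def pair_assign_def split: ph.split)
  then show ?thesis by (simp add: pre_le_def pb_sat_set_pb_subst_set)
qed

lemma pb_sat_set_inst_left:
  "pb_sat_set \<alpha> (pb_subst_set (inst_left z \<omega>) Ord) \<longleftrightarrow> pre_le Ord z (assign_subst \<alpha> \<omega>) \<alpha>"
proof -
  have "assign_subst \<alpha> (inst_left z \<omega>) = pair_assign z (assign_subst \<alpha> \<omega>) \<alpha>"
    by (auto simp: assign_subst_def inst_left_def pair_assign_def split: ph.split)
  then show ?thesis by (simp add: pre_le_iff_pair_assign pb_sat_set_pb_subst_set)
qed

lemma pb_sat_set_inst_right:
  "pb_sat_set \<alpha> (pb_subst_set (inst_right z \<omega>) Ord) \<longleftrightarrow> pre_le Ord z \<alpha> (assign_subst \<alpha> \<omega>)"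
proof -
  have "assign_subst \<alpha> (inst_right z \<omega>) = pair_assign z \<alpha> (assign_subst \<alpha> \<omega>)"
    by (auto simp: assign_subst_def inst_right_def pair_assign_def split: ph.split)
  then show ?thesis by (simp add: pre_le_iff_pair_assign pb_sat_set_pb_subst_set)
qed

lemma pre_le_refl: "preorder_encoding Ord z \<Longrightarrow> pre_le Ord z \<alpha> \<alpha>"
  by (simp add: preorder_encoding_def)

lemma pre_le_trans:
  "preorder_encoding Ord z \<Longrightarrow> pre_le Ord z \<alpha> \<beta> \<Longrightarrow> pre_le Ord z \<beta> \<gamma> \<Longrightarrow> pre_le Ord z \<alpha> \<gamma>"
  unfolding preorder_encoding_def by blast

lemma pre_le_f_refl: "preorder_encoding Ord z \<Longrightarrow> pre_le_f Ord z f \<alpha> \<alpha>"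
  by (simp add: pre_le_f_def pre_le_refl)

lemma pre_le_f_trans:
  "preorder_encoding Ord z \<Longrightarrow> pre_le_f Ord z f \<alpha> \<beta> \<Longrightarrow> pre_le_f Ord z f \<beta> \<gamma> \<Longrightarrow> pre_le_f Ord z f \<alpha> \<gamma>"
  unfolding pre_le_f_def using pre_le_trans by fastforce

lemma pre_le_cong_left:
  assumes enc: "preorder_encoding Ord z" and eq: "map \<alpha> z = map \<beta> z"
  shows "pre_le Ord z \<alpha> \<gamma> \<longleftrightarrow> pre_le Ord z \<beta> \<gamma>"
proof -
  have "pb_sat (pair_assign z \<alpha> \<gamma>) D \<longleftrightarrow> pb_sat (pair_assign z \<beta> \<gamma>) D" if "D \<in> Ord" for D
  proof (rule pb_sat_cong)
    fix p assume "p \<in> pb_vars D"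
    then obtain i where "i < length z" "p = PU i \<or> p = PV i"
      using enc \<open>D \<in> Ord\<close> unfolding preorder_encoding_def by blast
    moreover from this have "\<alpha> (z ! i) = \<beta> (z ! i)" using eq by (metis nth_map)
    ultimately show "pair_assign z \<alpha> \<gamma> p = pair_assign z \<beta> \<gamma> p"
      by (auto simp: pair_assign_def)
  qed
  then show ?thesis by (auto simp: pre_le_iff_pair_assign pb_sat_set_def)
qed

lemma wf_strict_part_finite_key:
  fixes key :: "'a \<Rightarrow> 'k"
  assumes fin: "finite (range key)"
    and refl: "\<And>a. le a a" and trans: "\<And>a b c. le a b \<Longrightarrow> le b c \<Longrightarrow> le a c"
    and cong: "\<And>a b c. key a = key b \<Longrightarrow> le a c \<longleftrightarrow> le b c"
  shows "wf {(a, b). le a b \<and> \<not> le b a}"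
proof (rule wf_subset[OF wf_measure])
  let ?below = "\<lambda>b. key ` {c. le c b}"
  show "{(a, b). le a b \<and> \<not> le b a} \<subseteq> measure (\<lambda>b. card (?below b))"
  proof clarify
    fix a b assume "le a b" "\<not> le b a"
    have "?below a \<subseteq> ?below b"
      by (rule image_mono) (use \<open>le a b\<close> trans in blast)
    moreover have "key b \<in> ?below b" by (rule imageI) (simp add: refl)
    moreover have "key b \<notin> ?below a"
    proof
      assume "key b \<in> ?below a"
      then obtain c where "key b = key c" "le c a" by (rule imageE) blast
      then show False using cong[of b c a] \<open>\<not> le b a\<close> by simp
    qed
    ultimately have "?below a \<subset> ?below b" by blast
    moreover have "finite (?below b)" by (rule finite_subset[OF _ fin]) blast
    ultimately show "(a, b) \<in> measure (\<lambda>b. card (?below b))" by (simp add: psubset_card_mono)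
  qed
qed

lemma wf_strict_pre_le:
  assumes "preorder_encoding Ord z"
  shows "wf {(\<alpha>, \<beta>). pre_le Ord z \<alpha> \<beta> \<and> \<not> pre_le Ord z \<beta> \<alpha>}"
proof (rule wf_strict_part_finite_key[where key = "\<lambda>\<alpha>. map \<alpha> z" and le = "pre_le Ord z"])
  have "range (\<lambda>\<alpha>. map \<alpha> z) \<subseteq> {xs. set xs \<subseteq> UNIV \<and> length xs = length z}"
    by auto
  moreover have "finite {xs :: bool list. set xs \<subseteq> UNIV \<and> length xs = length z}"
    by (rule finite_lists_length_eq) simp
  ultimately show "finite (range (\<lambda>\<alpha>. map \<alpha> z :: bool list))" by (rule finite_subset)
  show "pre_le Ord z \<alpha> \<alpha>" for \<alpha> using assms by (rule pre_le_refl)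
  show "pre_le Ord z \<alpha> \<gamma>" if "pre_le Ord z \<alpha> \<beta>" "pre_le Ord z \<beta> \<gamma>" for \<alpha> \<beta> \<gamma>
    using assms that by (rule pre_le_trans)
  show "pre_le Ord z \<alpha> \<gamma> \<longleftrightarrow> pre_le Ord z \<beta> \<gamma>" if "map \<alpha> z = map \<beta> z" for \<alpha> \<beta> \<gamma>
    using assms that by (rule pre_le_cong_left)
qed

subsection \<open>Redundance\<close>

lemma wf_descent:
  assumes "wf R" and refl: "\<And>x. le x x" and trans: "\<And>x y w. le x y \<Longrightarrow> le y w \<Longrightarrow> le x w"
    and step: "\<And>x. P x \<Longrightarrow> \<not> Q x \<Longrightarrow> \<exists>y. le y x \<and> (y, x) \<in> R \<and> P y"
    and "P x"
  shows "\<exists>y. le y x \<and> P y \<and> Q y"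
  using \<open>wf R\<close> \<open>P x\<close>
proof (induction x rule: wf_induct_rule)
  case (less x)
  show ?case
  proof (cases "Q x")
    case True
    then show ?thesis using less.prems refl by blast
  next
    case False
    then obtain y where "le y x" "(y, x) \<in> R" "P y" using step less.prems by blast
    then show ?thesis using less.IH trans by blast
  qed
qed

lemma redundance_conditions_sound:
  assumes a: "derives_set H
              (pb_subst_set \<omega> \<C> \<union> pb_subst_set (inst_left z \<omega>) Ord \<union> {obj_subst_le \<omega> f})"
    and b: "derives (H \<union> pb_subst_set (inst_right z \<omega>) Ord) pb_false"
    and \<rho>: "pb_sat_set \<rho> H"
  shows "pb_sat_set (assign_subst \<rho> \<omega>) \<C>" and "pre_le_f Ord z f (assign_subst \<rho> \<omega>) \<rho>"
    and "\<not> pre_le Ord z \<rho> (assign_subst \<rho> \<omega>)"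
proof -
  have "pb_sat_set \<rho> (pb_subst_set \<omega> \<C> \<union> pb_subst_set (inst_left z \<omega>) Ord \<union> {obj_subst_le \<omega> f})"
    using derives_set_sound[OF a \<rho>] .
  then show "pb_sat_set (assign_subst \<rho> \<omega>) \<C>" and "pre_le_f Ord z f (assign_subst \<rho> \<omega>) \<rho>"
    by (simp_all add: pb_sat_set_pb_subst_set[of _ \<omega>] pb_sat_set_inst_left pb_sat_obj_subst_le
        pre_le_f_def)
  show "\<not> pre_le Ord z \<rho> (assign_subst \<rho> \<omega>)"
  proof
    assume "pre_le Ord z \<rho> (assign_subst \<rho> \<omega>)"
    then have "pb_sat_set \<rho> (H \<union> pb_subst_set (inst_right z \<omega>) Ord)"
      using \<rho> by (simp add: pb_sat_set_inst_right)
    then show False using derives_sound[OF b] by (simp add: pb_false_def)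
  qed
qed

definition redundance_witness ::
  "'v pbc set \<Rightarrow> 'v pbc set \<Rightarrow> 'v objective \<Rightarrow> ubound \<Rightarrow> ph pbc set \<Rightarrow> 'v list \<Rightarrow> 'v pbc
   \<Rightarrow> ('v \<Rightarrow> 'v sval) \<Rightarrow> bool"
where
  "redundance_witness \<C> \<D> f v Ord z C \<omega> \<longleftrightarrow>
     derives_set (\<C> \<union> \<D> \<union> obj_le_ub f (ub_dec v) \<union> {pb_neg C})
       (pb_subst_set \<omega> \<C> \<union> pb_subst_set (inst_left z \<omega>) Ord \<union> {obj_subst_le \<omega> f})
     \<and> derives (\<C> \<union> \<D> \<union> obj_le_ub f (ub_dec v) \<union> {pb_neg C}
                  \<union> pb_subst_set (inst_right z \<omega>) Ord) pb_false"

lemma redundance_descent_step: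
  assumes enc: "preorder_encoding Ord z" and wit: "redundance_witness \<C> \<D> f v Ord z C \<omega>"
    and wv: "weakly_valid F f \<C> \<D> Ord z v"
    and \<rho>: "pb_sat_set \<rho> (\<C> \<union> \<D> \<union> obj_le_ub f (ub_dec v))" and "\<not> pb_sat \<rho> C"
  obtains \<rho>' where "pre_le_f Ord z f \<rho>' \<rho>" and "\<not> pre_le Ord z \<rho> \<rho>'"
    and "pb_sat_set \<rho>' (\<C> \<union> \<D> \<union> obj_le_ub f (ub_dec v))"
proof -
  let ?B = "obj_le_ub f (ub_dec v)" and ?\<rho>\<omega> = "assign_subst \<rho> \<omega>"
  have "pb_sat_set \<rho> (\<C> \<union> \<D> \<union> ?B \<union> {pb_neg C})"
    using \<rho> \<open>\<not> pb_sat \<rho> C\<close> pb_sat_pb_neg by simp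
  note \<rho>\<omega> = redundance_conditions_sound[OF wit[unfolded redundance_witness_def, THEN conjunct1]
      wit[unfolded redundance_witness_def, THEN conjunct2] this]
  have "pb_sat_set ?\<rho>\<omega> ?B"
    using \<rho> \<rho>\<omega>(2) by (auto simp: pre_le_f_def intro: pb_sat_set_obj_le_ub_mono)
  then have "pb_sat_set ?\<rho>\<omega> (\<C> \<union> ?B)" using \<rho>\<omega>(1) by simp
  then obtain \<rho>' where \<rho>': "pre_le_f Ord z f \<rho>' ?\<rho>\<omega>" "pb_sat_set \<rho>' (\<C> \<union> \<D> \<union> ?B)"
    using wv unfolding weakly_valid_def by blast
  have "pre_le_f Ord z f \<rho>' \<rho>" using \<rho>'(1) \<rho>\<omega>(2) pre_le_f_trans[OF enc] by blast
  moreover have "\<not> pre_le Ord z \<rho> \<rho>'"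
    using \<rho>'(1) \<rho>\<omega>(3) pre_le_trans[OF enc] by (auto simp: pre_le_f_def)
  ultimately show ?thesis using that \<rho>'(2) by blast
qed

lemma weakly_valid_insert_redundant:
  assumes enc: "preorder_encoding Ord z" and wit: "redundance_witness \<C> \<D> f v Ord z C \<omega>"
    and wv: "weakly_valid F f \<C> \<D> Ord z v"
  shows "weakly_valid F f \<C> (\<D> \<union> {C}) Ord z v"
proof -
  let ?B = "obj_le_ub f (ub_dec v)"
  have descent: "\<exists>\<rho>'. pre_le_f Ord z f \<rho>' \<rho> \<and> pb_sat_set \<rho>' (\<C> \<union> \<D> \<union> ?B) \<and> pb_sat \<rho>' C"
    if "pb_sat_set \<rho> (\<C> \<union> \<D> \<union> ?B)" for \<rho>
  proof (rule wf_descent[OF wf_strict_pre_le[OF enc]])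
    show "pre_le_f Ord z f \<alpha> \<alpha>" for \<alpha> by (rule pre_le_f_refl[OF enc])
    show "pre_le_f Ord z f \<alpha> \<gamma>" if "pre_le_f Ord z f \<alpha> \<beta>" "pre_le_f Ord z f \<beta> \<gamma>" for \<alpha> \<beta> \<gamma>
      using pre_le_f_trans[OF enc that] .
  qed (use that redundance_descent_step[OF enc wit wv] in \<open>auto simp: pre_le_f_def\<close>)
  have "\<exists>\<rho>'. pre_le_f Ord z f \<rho>' \<rho> \<and> pb_sat_set \<rho>' (\<C> \<union> (\<D> \<union> {C}) \<union> ?B)"
    if sat: "pb_sat_set \<rho> (\<C> \<union> ?B)" for \<rho>
  proof -
    obtain \<rho>1 where "pre_le_f Ord z f \<rho>1 \<rho>" "pb_sat_set \<rho>1 (\<C> \<union> \<D> \<union> ?B)"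
      using wv sat unfolding weakly_valid_def by blast
    moreover from this(2) obtain \<rho>' where "pre_le_f Ord z f \<rho>' \<rho>1"
      "pb_sat_set \<rho>' (\<C> \<union> \<D> \<union> ?B)" "pb_sat \<rho>' C"
      using descent by blast
    ultimately have "pre_le_f Ord z f \<rho>' \<rho>" "pb_sat_set \<rho>' (\<C> \<union> (\<D> \<union> {C}) \<union> ?B)"
      using pre_le_f_trans[OF enc] by auto
    then show ?thesis by blast
  qed
  then show ?thesis using wv unfolding weakly_valid_def by blast
qed

theorem mainTheorem7:
  fixes F \<C> \<D> :: "'v pbc set" and f :: "'v objective" and Ord :: "ph pbc set"
    and z :: "'v list" and v :: ubound and C :: "'v pbc" and \<omega> :: "'v \<Rightarrow> 'v sval"
  assumes enc: "preorder_encoding Ord z"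
    and a: "derives_set (\<C> \<union> \<D> \<union> obj_le_ub f (ub_dec v) \<union> {pb_neg C})
              (pb_subst_set \<omega> \<C> \<union> pb_subst_set (inst_left z \<omega>) Ord \<union> {obj_subst_le \<omega> f})"
    and b: "derives (\<C> \<union> \<D> \<union> obj_le_ub f (ub_dec v) \<union> {pb_neg C}
                       \<union> pb_subst_set (inst_right z \<omega>) Ord) pb_false"
  shows "(weakly_valid F f \<C> \<D> Ord z v \<longrightarrow> weakly_valid F f \<C> (\<D> \<union> {C}) Ord z v)
       \<and> (valid F f \<C> \<D> Ord z v \<longrightarrow> valid F f \<C> (\<D> \<union> {C}) Ord z v)"
proof -
  have "redundance_witness \<C> \<D> f v Ord z C \<omega>"
    using a b by (simp add: redundance_witness_def)
  then show ?thesis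
    using weakly_valid_insert_redundant[OF enc] unfolding valid_def by blast
qed

end
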